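(* Let $m,n,k$ be positive integers. If $\vartheta\big(\overline{G_D(K_{m,n})}\big) > k$ for every circular drawing $D$ of $K_{m,n}$, then $\nu_k(K_{m,n})>0$.
   Context: A circular drawing $D$ of $K_{m,n}$ places the $m+n$ vertices at distinct points of a circle and draws each edge as the straight chord between its endpoints. The auxiliary graph $G_D(K_{m,n})$ has as vertex set the edge set of $K_{m,n}$, two vertices being adjacent iff the corresponding chords cross in $D$. $\overline{H}$ denotes the complement of a graph $H$. For a graph $G=(V,E)$, the Lovász number is $\vartheta(G):=\max\{\sum_{i,j\in V}X_{ij} : X\in\mathbb{R}^{V\times V}\text{ positive semidefinite},\ X_{ij}=0 \text{ for } \{i,j\}\in E,\ \mathrm{trace}(X)=1\}$. A book with $k$ pages consists of a line (the spine) and $k$ half-planes (pages) bounded by it; a $k$-page drawing places vertices on the spine and each edge in a single page; $\nu_k(G)$ is the minimum number of crossings over all $k$-page drawings of $G$. *)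

theory Defs
  imports "HOL-Analysis.Analysis"
begin

text \<open>Vertices: Inl i (i < m) on one side, Inr j (j < n) on the other.
  The edge (i,j) joins Inl i and Inr j.\<close>

definition Kmn_vertices :: "nat \<Rightarrow> nat \<Rightarrow> (nat + nat) set" where
  "Kmn_vertices m n = Inl ` {..<m} \<union> Inr ` {..<n}"

definition Kmn_edges :: "nat \<Rightarrow> nat \<Rightarrow> (nat \<times> nat) set" where
  "Kmn_edges m n = {..<m} \<times> {..<n}"

definition share_endpoint :: "nat \<times> nat \<Rightarrow> nat \<times> nat \<Rightarrow> bool" where
  "share_endpoint e f \<longleftrightarrow> fst e = fst f \<or> snd e = snd f"

definition circular_drawing :: "nat \<Rightarrow> nat \<Rightarrow> (nat + nat \<Rightarrow> complex) \<Rightarrow> bool" where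
  "circular_drawing m n D \<longleftrightarrow>
     inj_on D (Kmn_vertices m n) \<and> D ` Kmn_vertices m n \<subseteq> sphere 0 1"

definition chord :: "(nat + nat \<Rightarrow> complex) \<Rightarrow> nat \<times> nat \<Rightarrow> complex set" where
  "chord D e = closed_segment (D (Inl (fst e))) (D (Inr (snd e)))"

text \<open>Two chords cross iff they have no common endpoint and the segments meet
  (for chords with four distinct endpoints on a circle, any common point is an
  interior crossing point).\<close>

definition chords_cross :: "(nat + nat \<Rightarrow> complex) \<Rightarrow> nat \<times> nat \<Rightarrow> nat \<times> nat \<Rightarrow> bool" where
  "chords_cross D e f \<longleftrightarrow> \<not> share_endpoint e f \<and> chord D e \<inter> chord D f \<noteq> {}"

text \<open>G_D(K_{m,n}) has vertex set Kmn_edges m n and adjacency chords_cross D.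
  Its complement has the same vertex set and adjacency below.\<close>

definition GD_adj :: "(nat + nat \<Rightarrow> complex) \<Rightarrow> nat \<times> nat \<Rightarrow> nat \<times> nat \<Rightarrow> bool" where
  "GD_adj D e f \<longleftrightarrow> chords_cross D e f"

definition complement_adj :: "('a \<Rightarrow> 'a \<Rightarrow> bool) \<Rightarrow> 'a \<Rightarrow> 'a \<Rightarrow> bool" where
  "complement_adj adj x y \<longleftrightarrow> x \<noteq> y \<and> \<not> adj x y"

definition psd_on :: "'a set \<Rightarrow> ('a \<Rightarrow> 'a \<Rightarrow> real) \<Rightarrow> bool" where
  "psd_on S X \<longleftrightarrow> (\<forall>i\<in>S. \<forall>j\<in>S. X i j = X j i) \<and>
     (\<forall>v :: 'a \<Rightarrow> real. 0 \<le> (\<Sum>i\<in>S. \<Sum>j\<in>S. v i * X i j * v j))"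

definition lovasz_theta :: "'a set \<Rightarrow> ('a \<Rightarrow> 'a \<Rightarrow> bool) \<Rightarrow> real" where
  "lovasz_theta S adj = Sup {(\<Sum>i\<in>S. \<Sum>j\<in>S. X i j) | X.
      psd_on S X \<and> (\<forall>i\<in>S. \<forall>j\<in>S. adj i j \<longrightarrow> X i j = 0) \<and> (\<Sum>i\<in>S. X i i) = 1}"

text \<open>A k-page drawing: an injective placement s of the vertices on the spine (a line)
  and an assignment pg of each edge to one of the pages 0..k-1.  As usual, two edges
  in the same page cross iff their endpoints interleave along the spine (this is the
  minimal number of crossings realisable for the given spine order and page
  assignment).\<close>

definition book_drawing :: "nat \<Rightarrow> nat \<Rightarrow> nat \<Rightarrow> (nat + nat \<Rightarrow> real) \<Rightarrow> (nat \<times> nat \<Rightarrow> nat) \<Rightarrow> bool" where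
  "book_drawing k m n s pg \<longleftrightarrow>
     inj_on s (Kmn_vertices m n) \<and> pg ` Kmn_edges m n \<subseteq> {..<k}"

definition strictly_between :: "(nat + nat \<Rightarrow> real) \<Rightarrow> nat + nat \<Rightarrow> nat + nat \<Rightarrow> nat + nat \<Rightarrow> bool" where
  "strictly_between s a b x \<longleftrightarrow> min (s a) (s b) < s x \<and> s x < max (s a) (s b)"

definition book_cross :: "(nat + nat \<Rightarrow> real) \<Rightarrow> (nat \<times> nat \<Rightarrow> nat) \<Rightarrow> nat \<times> nat \<Rightarrow> nat \<times> nat \<Rightarrow> bool" where
  "book_cross s pg e f \<longleftrightarrow> pg e = pg f \<and> \<not> share_endpoint e f \<and>
     (strictly_between s (Inl (fst e)) (Inr (snd e)) (Inl (fst f)) \<noteq>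
      strictly_between s (Inl (fst e)) (Inr (snd e)) (Inr (snd f)))"

definition book_crossings :: "nat \<Rightarrow> nat \<Rightarrow> (nat + nat \<Rightarrow> real) \<Rightarrow> (nat \<times> nat \<Rightarrow> nat) \<Rightarrow> nat" where
  "book_crossings m n s pg =
     card {{e, f} | e f. e \<in> Kmn_edges m n \<and> f \<in> Kmn_edges m n \<and> book_cross s pg e f}"

definition nu_Kmn :: "nat \<Rightarrow> nat \<Rightarrow> nat \<Rightarrow> nat" where
  "nu_Kmn k m n = (LEAST c. \<exists>s pg. book_drawing k m n s pg \<and> book_crossings m n s pg = c)"

end

theory Submission
  imports Defs
begin

text \<open>Suppose some \<open>k\<close>-page drawing of \<open>K\<^sub>m\<^sub>,\<^sub>n\<close> has no crossings. Bending the spine onto an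
  open half of the unit circle (via \<open>x \<mapsto> cis (arctan x)\<close>) turns it into a circular drawing \<open>D\<close>
  in which two edges whose endpoints do not interleave along the spine give disjoint chords.
  Hence every page is an independent set of \<open>G\<^sub>D\<close>, i.e. a clique of its complement, and the
  pages form a cover of the complement by \<open>k\<close> cliques. The Lovasz number is bounded by the
  clique cover number (test the feasible matrix against the \<open>k\<close> vectors \<open>1 - k\<one>\<^sub>P\<close>, one per
  page \<open>P\<close>), contradicting the hypothesis.\<close>

lemma Re_mult_lt_on_closed_segment:
  assumes "z \<in> closed_segment p q" "Re (p * w) < h" "Re (q * w) < h"
  shows "Re (z * w) < h"
proof -
  obtain u where u: "0 \<le> u" "u \<le> 1" "z = (1 - u) *\<^sub>R p + u *\<^sub>R q"
    using assms(1) in_segment(1) by blast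
  have "Re (z * w) = (1 - u) * Re (p * w) + u * Re (q * w)"
    unfolding u(3) by (simp add: scaleR_conv_of_real algebra_simps)
  also have "\<dots> < (1 - u) * h + u * h"
  proof (cases "u = 1")
    case False
    hence "(1 - u) * Re (p * w) < (1 - u) * h" using u assms(2) by simp
    moreover have "u * Re (q * w) \<le> u * h" using u assms(3) by (simp add: mult_left_mono)
    ultimately show ?thesis by linarith
  qed (use assms(3) in simp)
  finally show ?thesis by (simp add: algebra_simps)
qed

lemma Re_mult_eq_on_closed_segment:
  assumes "z \<in> closed_segment p q" "Re (p * w) = h" "Re (q * w) = h"
  shows "Re (z * w) = h"
proof -
  obtain u where u: "z = (1 - u) *\<^sub>R p + u *\<^sub>R q"
    using assms(1) in_segment(1) by blast
  show ?thesis
    using assms(2,3) unfolding u by (simp add: scaleR_conv_of_real algebra_simps)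
qed

lemma cis_segments_disjoint_if_outside:
  assumes angles: "a \<in> {-pi/2<..<pi/2}" "b \<in> {-pi/2<..<pi/2}" "c \<in> {-pi/2<..<pi/2}" "d \<in> {-pi/2<..<pi/2}"
    and "c < d" "a \<notin> {c..d}" "b \<notin> {c..d}"
  shows "closed_segment (cis a) (cis b) \<inter> closed_segment (cis c) (cis d) = {}"
proof -
  text \<open>The functional \<open>z \<mapsto> Re (z * w)\<close> is constant on the line through \<open>cis c\<close> and
    \<open>cis d\<close> and strictly smaller at the points of the arc outside \<open>[c, d]\<close>.\<close>
  define w where "w = cis (- ((c + d) / 2))"
  define h where "h = cos ((d - c) / 2)"
  have Re_cis_w: "Re (cis t * w) = cos \<bar>t - (c + d) / 2\<bar>" for t
    by (simp add: w_def cis_mult)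
  have outside: "Re (cis t * w) < h" if "t \<in> {-pi/2<..<pi/2}" "t \<notin> {c..d}" for t
    unfolding Re_cis_w h_def
    using that angles \<open>c < d\<close> by (intro cos_monotone_0_pi) (auto simp: abs_real_def field_simps)
  have half_width: "\<bar>c - (c + d) / 2\<bar> = (d - c) / 2" "\<bar>d - (c + d) / 2\<bar> = (d - c) / 2"
    using \<open>c < d\<close> by (simp_all add: abs_real_def field_simps)
  have ends: "Re (cis c * w) = h" "Re (cis d * w) = h"
    unfolding Re_cis_w h_def half_width by (rule refl)+
  show ?thesis
  proof (rule ccontr)
    assume "\<not> ?thesis"
    then obtain z where "z \<in> closed_segment (cis a) (cis b)" "z \<in> closed_segment (cis c) (cis d)"
      by blast
    with Re_mult_lt_on_closed_segment[of z] Re_mult_eq_on_closed_segment[of z] outside ends assms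
    show False by (metis less_irrefl)
  qed
qed

lemma cis_segments_disjoint_if_not_interleaved:
  assumes "a \<in> {-pi/2<..<pi/2}" "b \<in> {-pi/2<..<pi/2}" "c \<in> {-pi/2<..<pi/2}" "d \<in> {-pi/2<..<pi/2}"
    "a \<noteq> c" "a \<noteq> d" "b \<noteq> c" "b \<noteq> d" "a \<noteq> b" "c \<noteq> d"
    "(min a b < c \<and> c < max a b) = (min a b < d \<and> d < max a b)"
  shows "closed_segment (cis a) (cis b) \<inter> closed_segment (cis c) (cis d) = {}"
proof -
  have sorted: "closed_segment (cis (min x y)) (cis (max x y)) = closed_segment (cis x) (cis y)" for x y
    by (cases "x \<le> y") (auto simp: min_def max_def closed_segment_commute)
  show ?thesis
  proof (cases "min a b < c \<and> c < max a b")
    case True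
    have "closed_segment (cis a) (cis b) \<inter> closed_segment (cis (min c d)) (cis (max c d)) = {}"
      using assms True
      by (intro cis_segments_disjoint_if_outside) (auto simp: min_def max_def split: if_splits)
    thus ?thesis by (simp add: sorted)
  next
    case False
    have "closed_segment (cis c) (cis d) \<inter> closed_segment (cis (min a b)) (cis (max a b)) = {}"
      using assms False
      by (intro cis_segments_disjoint_if_outside) (auto simp: min_def max_def split: if_splits)
    thus ?thesis by (auto simp: sorted)
  qed
qed

lemma cis_arctan_segments_disjoint_if_not_interleaved:
  fixes p q r t :: real
  assumes "p \<noteq> r" "p \<noteq> t" "q \<noteq> r" "q \<noteq> t" "p \<noteq> q" "r \<noteq> t"
    "(min p q < r \<and> r < max p q) = (min p q < t \<and> t < max p q)"
  shows "closed_segment (cis (arctan p)) (cis (arctan q)) \<inter>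
         closed_segment (cis (arctan r)) (cis (arctan t)) = {}"
proof (rule cis_segments_disjoint_if_not_interleaved)
  have "arctan x \<in> {-pi/2<..<pi/2}" for x
    using arctan_lbound[of x] arctan_ubound[of x] by auto
  thus "arctan p \<in> {-pi/2<..<pi/2}" "arctan q \<in> {-pi/2<..<pi/2}"
    "arctan r \<in> {-pi/2<..<pi/2}" "arctan t \<in> {-pi/2<..<pi/2}" by blast+
  show "arctan p \<noteq> arctan r" "arctan p \<noteq> arctan t" "arctan q \<noteq> arctan r"
    "arctan q \<noteq> arctan t" "arctan p \<noteq> arctan q" "arctan r \<noteq> arctan t"
    using assms by (auto simp: arctan_eq_iff)
  show "(min (arctan p) (arctan q) < arctan r \<and> arctan r < max (arctan p) (arctan q)) =
    (min (arctan p) (arctan q) < arctan t \<and> arctan t < max (arctan p) (arctan q))"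
    using assms(7) by (auto simp: min_def max_def arctan_less_iff arctan_le_iff split: if_splits)
qed

lemma inj_cis_arctan: "inj (\<lambda>x. cis (arctan x))"
proof (rule injI)
  fix x y assume "cis (arctan x) = cis (arctan y)"
  hence "tan (arctan x) = tan (arctan y)"
    by (metis tan_def cis.sel)
  thus "x = y" by (simp only: tan_arctan)
qed

lemma psd_on_diagonal:
  assumes "finite S" "\<forall>i\<in>S. 0 \<le> d i"
  shows "psd_on S (\<lambda>i j. if i = j then d i else 0)"
  unfolding psd_on_def
proof (intro conjI ballI allI)
  fix v :: "'a \<Rightarrow> real"
  have "(\<Sum>i\<in>S. \<Sum>j\<in>S. v i * (if i = j then d i else 0) * v j) = (\<Sum>i\<in>S. d i * v i * v i)"
    using assms(1) by (simp add: if_distrib if_distribR sum.delta algebra_simps cong: if_cong)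
  also have "\<dots> \<ge> 0" using assms(2) by (intro sum_nonneg) (simp add: mult.assoc)
  finally show "0 \<le> (\<Sum>i\<in>S. \<Sum>j\<in>S. v i * (if i = j then d i else 0) * v j)" .
qed simp

lemma sum_centered_indicator_products:
  fixes a b k :: nat
  assumes "a < k" "b < k"
  shows "(\<Sum>t<k. (1 - real k * of_bool (a = t)) * (1 - real k * of_bool (b = t)))
       = real k * real k * of_bool (a = b) - real k"
proof -
  have expand: "(1 - real k * of_bool (a = t)) * (1 - real k * of_bool (b = t))
      = 1 - real k * of_bool (a = t) - real k * of_bool (b = t)
        + real k * real k * of_bool (a = t \<and> b = t)" for t
    by (auto simp: algebra_simps)
  have "(\<Sum>t<k. of_bool (a = t \<and> b = t) :: real) = of_bool (a = b)"
  proof (cases "a = b")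
    case False
    hence "(\<Sum>t<k. of_bool (a = t \<and> b = t) :: real) = 0" by (intro sum.neutral) auto
    thus ?thesis using False by simp
  qed (use assms in \<open>simp add: sum.delta\<close>)
  thus ?thesis
    using assms unfolding expand sum.distrib sum_subtractf sum_distrib_left[symmetric]
    by (simp add: sum.delta)
qed

lemma feasible_value_le_clique_cover:
  fixes c :: "'a \<Rightarrow> nat"
  assumes fin: "finite S" and "0 < k" and col: "\<forall>i\<in>S. c i < k"
    and clique: "\<forall>i\<in>S. \<forall>j\<in>S. i \<noteq> j \<and> c i = c j \<longrightarrow> adj i j"
    and psd: "psd_on S X" and zero: "\<forall>i\<in>S. \<forall>j\<in>S. adj i j \<longrightarrow> X i j = 0"
    and trace: "(\<Sum>i\<in>S. X i i) = 1"
  shows "(\<Sum>i\<in>S. \<Sum>j\<in>S. X i j) \<le> real k"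
proof -
  define v where "v t i = 1 - real k * of_bool (c i = t)" for t i
  have same_class: "(\<Sum>j\<in>S. X i j * of_bool (c i = c j)) = X i i" if "i \<in> S" for i
  proof -
    have "(\<Sum>j\<in>S. X i j * of_bool (c i = c j)) = (\<Sum>j\<in>S. if j = i then X i i else 0)"
      using clique zero that by (intro sum.cong) auto
    thus ?thesis using fin that by (simp add: sum.delta')
  qed
  have "0 \<le> (\<Sum>t<k. \<Sum>i\<in>S. \<Sum>j\<in>S. v t i * X i j * v t j)"
    using psd unfolding psd_on_def by (intro sum_nonneg[of "{..<k}"]) blast
  also have "\<dots> = (\<Sum>i\<in>S. \<Sum>j\<in>S. X i j * (\<Sum>t<k. v t i * v t j))"
    by (simp add: sum.swap[of _ "{..<k}"] sum.swap[of _ "{..<k}" S] sum_distrib_left algebra_simps)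
  also have "\<dots> = (\<Sum>i\<in>S. \<Sum>j\<in>S. X i j * (real k * real k * of_bool (c i = c j) - real k))"
    unfolding v_def using col by (intro sum.cong refl) (simp add: sum_centered_indicator_products)
  also have "\<dots> = real k * real k * (\<Sum>i\<in>S. \<Sum>j\<in>S. X i j * of_bool (c i = c j))
       - real k * (\<Sum>i\<in>S. \<Sum>j\<in>S. X i j)"
    by (simp add: sum_distrib_left sum_subtractf algebra_simps)
  also have "\<dots> = real k * real k - real k * (\<Sum>i\<in>S. \<Sum>j\<in>S. X i j)"
    using same_class trace by simp
  finally show ?thesis using \<open>0 < k\<close> by (simp add: mult_le_cancel_left_pos)
qed

lemma lovasz_theta_le_clique_cover:
  fixes c :: "'a \<Rightarrow> nat"
  assumes fin: "finite S" and "S \<noteq> {}" and "0 < k" and "\<forall>i\<in>S. c i < k"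
    and "\<forall>i\<in>S. \<forall>j\<in>S. i \<noteq> j \<and> c i = c j \<longrightarrow> adj i j"
    and irrefl: "\<forall>i\<in>S. \<not> adj i i"
  shows "lovasz_theta S adj \<le> real k"
  unfolding lovasz_theta_def
proof (rule cSup_least)
  define X0 where "X0 i j = (if i = j then 1 / real (card S) else 0)" for i j :: 'a
  have "psd_on S X0" unfolding X0_def using fin by (intro psd_on_diagonal) auto
  moreover have "\<forall>i\<in>S. \<forall>j\<in>S. adj i j \<longrightarrow> X0 i j = 0" using irrefl by (auto simp: X0_def)
  moreover have "(\<Sum>i\<in>S. X0 i i) = 1" using fin \<open>S \<noteq> {}\<close> by (simp add: X0_def)
  ultimately show "{(\<Sum>i\<in>S. \<Sum>j\<in>S. X i j) | X. psd_on S X \<and>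
      (\<forall>i\<in>S. \<forall>j\<in>S. adj i j \<longrightarrow> X i j = 0) \<and> (\<Sum>i\<in>S. X i i) = 1} \<noteq> {}"
    by blast
qed (use feasible_value_le_clique_cover[OF assms(1,3-5)] in blast)

lemma nu_Kmn_attained:
  assumes "0 < k"
  shows "\<exists>s pg. book_drawing k m n s pg \<and> book_crossings m n s pg = nu_Kmn k m n"
proof -
  define s0 :: "nat + nat \<Rightarrow> real" where "s0 x = real (case x of Inl i \<Rightarrow> 2*i | Inr j \<Rightarrow> 2*j+1)" for x
  have "inj_on s0 (Kmn_vertices m n)"
    unfolding inj_on_def s0_def of_nat_eq_iff by (auto split: sum.splits) presburger+
  hence "book_drawing k m n s0 (\<lambda>_. 0)" using assms by (auto simp: book_drawing_def)
  hence "\<exists>c s pg. book_drawing k m n s pg \<and> book_crossings m n s pg = c" by blast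
  from LeastI_ex[OF this] show ?thesis unfolding nu_Kmn_def .
qed

lemma book_crossings_eq_0_imp_not_book_cross:
  assumes "book_crossings m n s pg = 0" "e \<in> Kmn_edges m n" "f \<in> Kmn_edges m n"
  shows "\<not> book_cross s pg e f"
proof -
  let ?E = "Kmn_edges m n"
  have "finite {{e, f} | e f. e \<in> ?E \<and> f \<in> ?E \<and> book_cross s pg e f}"
    by (rule finite_subset[of _ "(\<lambda>(e, f). {e, f}) ` (?E \<times> ?E)"]) (auto simp: Kmn_edges_def)
  hence "{{e, f} | e f. e \<in> ?E \<and> f \<in> ?E \<and> book_cross s pg e f} = {}"
    using assms(1) by (simp add: book_crossings_def)
  thus ?thesis using assms(2,3) by blast
qed

lemma circular_drawing_cis_arctan:
  assumes "inj_on s (Kmn_vertices m n)"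
  shows "circular_drawing m n (\<lambda>v. cis (arctan (s v)))"
  unfolding circular_drawing_def
  using comp_inj_on[OF assms inj_on_subset[OF inj_cis_arctan]]
  by (auto simp: comp_def)

lemma chords_cross_cis_arctan_imp_book_cross:
  assumes inj: "inj_on s (Kmn_vertices m n)"
    and "e \<in> Kmn_edges m n" "f \<in> Kmn_edges m n" "pg e = pg f"
    and cross: "chords_cross (\<lambda>v. cis (arctan (s v))) e f"
  shows "book_cross s pg e f"
proof (rule ccontr)
  assume no_book_cross: "\<not> book_cross s pg e f"
  obtain a b c d where ef: "e = (a, b)" "f = (c, d)" "a < m" "b < n" "c < m" "d < n"
    using assms(2,3) by (auto simp: Kmn_edges_def)
  have "a \<noteq> c" "b \<noteq> d" using cross ef by (auto simp: chords_cross_def share_endpoint_def)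
  moreover have "Inl a \<in> Kmn_vertices m n" "Inr b \<in> Kmn_vertices m n"
    "Inl c \<in> Kmn_vertices m n" "Inr d \<in> Kmn_vertices m n"
    using ef by (auto simp: Kmn_vertices_def)
  ultimately have distinct: "s (Inl a) \<noteq> s (Inl c)" "s (Inl a) \<noteq> s (Inr d)" "s (Inr b) \<noteq> s (Inl c)"
      "s (Inr b) \<noteq> s (Inr d)" "s (Inl a) \<noteq> s (Inr b)" "s (Inl c) \<noteq> s (Inr d)"
    using inj unfolding inj_on_def by blast+
  have "(min (s (Inl a)) (s (Inr b)) < s (Inl c) \<and> s (Inl c) < max (s (Inl a)) (s (Inr b))) =
      (min (s (Inl a)) (s (Inr b)) < s (Inr d) \<and> s (Inr d) < max (s (Inl a)) (s (Inr b)))"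
    using no_book_cross \<open>pg e = pg f\<close> \<open>a \<noteq> c\<close> \<open>b \<noteq> d\<close> ef
    by (auto simp: book_cross_def share_endpoint_def strictly_between_def)
  from cis_arctan_segments_disjoint_if_not_interleaved[OF distinct this]
  show False using cross ef by (simp add: chords_cross_def chord_def)
qed

theorem corollary11:
  fixes m n k :: nat
  assumes "0 < m" and "0 < n" and "0 < k"
    and "\<forall>D. circular_drawing m n D \<longrightarrow>
           lovasz_theta (Kmn_edges m n) (complement_adj (GD_adj D)) > real k"
  shows "nu_Kmn k m n > 0"
proof (rule ccontr)
  assume "\<not> nu_Kmn k m n > 0"
  then obtain s pg where drawing: "book_drawing k m n s pg" and planar: "book_crossings m n s pg = 0"
    using nu_Kmn_attained[OF \<open>0 < k\<close>, of m n] by auto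
  define D where "D v = cis (arctan (s v))" for v
  have inj: "inj_on s (Kmn_vertices m n)" using drawing by (simp add: book_drawing_def)
  have "lovasz_theta (Kmn_edges m n) (complement_adj (GD_adj D)) \<le> real k"
  proof (rule lovasz_theta_le_clique_cover[where c = pg])
    show "\<forall>i\<in>Kmn_edges m n. \<forall>j\<in>Kmn_edges m n. i \<noteq> j \<and> pg i = pg j \<longrightarrow> complement_adj (GD_adj D) i j"
    proof (intro ballI impI)
      fix e f assume ef: "e \<in> Kmn_edges m n" "f \<in> Kmn_edges m n" and "e \<noteq> f \<and> pg e = pg f"
      have "\<not> chords_cross D e f"
        using book_crossings_eq_0_imp_not_book_cross[OF planar ef]
          chords_cross_cis_arctan_imp_book_cross[OF inj ef] \<open>e \<noteq> f \<and> pg e = pg f\<close>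
        unfolding D_def by blast
      thus "complement_adj (GD_adj D) e f"
        using \<open>e \<noteq> f \<and> pg e = pg f\<close> by (simp add: complement_adj_def GD_adj_def)
    qed
  qed (use assms drawing in \<open>auto simp: Kmn_edges_def book_drawing_def complement_adj_def\<close>)
  moreover have "circular_drawing m n D"
    unfolding D_def by (rule circular_drawing_cis_arctan[OF inj])
  ultimately show False using assms(4) by fastforce
qed

end
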